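(* Let $X$ be a compact metric countable space and $f:X\to X$ a continuous function such that every accumulation point of $X$ is periodic. Let $a$ be an accumulation point of $X$. If there are a sequence $(a_n)_{n\in\mathbb N}$ in $X$ and a periodic point $b\in X\setminus\mathcal O_f(a)$ such that $a_n\to a$ and $b\in\overline{\mathcal O_f(a_n)}$ for every $n\in\mathbb N$, then $f^p$ is discontinuous at $a$ for every $p\in\mathbb N^*$.
   Context: $\mathbb N^*$ denotes the set of free ultrafilters on $\mathbb N$. For $p\in\mathbb N^*$, the $p$-iterate $f^p:X\to X$ is defined by $f^p(x)=p\text{-}\lim_{n\to\infty}f^n(x)$, where $y=p\text{-}\lim x_n$ means $\{n: x_n\in V\}\in p$ for every neighborhood $V$ of $y$. The orbit of $x$ is $\mathcal O_f(x)=\{f^n(x):n\in\mathbb N\}$. A point $x$ is periodic if $f^n(x)=x$ for some $n\ge1$. An accumulation point is a non-isolated point. *)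

theory Defs
  imports "HOL-Analysis.Analysis"
begin

definition ultrafilter :: "nat filter \<Rightarrow> bool" where
  "ultrafilter p \<longleftrightarrow> p \<noteq> bot \<and> (\<forall>P. eventually P p \<or> eventually (\<lambda>n. \<not> P n) p)"

definition free_ultrafilter :: "nat filter \<Rightarrow> bool" where
  "free_ultrafilter p \<longleftrightarrow> ultrafilter p \<and> (\<forall>m. \<not> eventually (\<lambda>n. n = m) p)"

definition p_iterate :: "('a::t2_space \<Rightarrow> 'a) \<Rightarrow> nat filter \<Rightarrow> 'a \<Rightarrow> 'a" where
  "p_iterate f p x = Lim p (\<lambda>n. (f ^^ n) x)"

definition orbit :: "('a \<Rightarrow> 'a) \<Rightarrow> 'a \<Rightarrow> 'a set" where
  "orbit f x = {(f ^^ n) x | n. True}"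

definition periodic_point :: "('a \<Rightarrow> 'a) \<Rightarrow> 'a \<Rightarrow> bool" where
  "periodic_point f x \<longleftrightarrow> (\<exists>n\<ge>1. (f ^^ n) x = x)"

end

theory Submission
  imports Defs
begin

text \<open>
  The key fact is that whenever a periodic point \<open>b\<close> lies in the closure of the orbit of \<open>x\<close>,
  the \<open>\<omega>\<close>-limit set of \<open>x\<close> is contained in the orbit of \<open>b\<close>. Either the orbit of \<open>x\<close> reaches \<open>b\<close>,
  or it is infinite; then every point of \<open>\<omega>(x)\<close> is an accumulation point of \<open>X\<close>, hence periodic,
  and the countable compact set \<open>\<omega>(x)\<close> has an isolated point \<open>c\<close>. The finite orbit of \<open>c\<close> is
  forward invariant and open in \<open>\<omega>(x)\<close>, and \<open>\<omega>\<close>-limit sets cannot be split in this way, so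
  \<open>\<omega>(x)\<close> is the orbit of \<open>c\<close>, which is the orbit of \<open>b\<close>.

  For a free ultrafilter \<open>p\<close> the point \<open>f\<^sup>p(x)\<close> lies in \<open>\<omega>(x)\<close>. Hence all \<open>f\<^sup>p(a\<^sub>n)\<close> lie in
  the finite, hence closed, orbit of \<open>b\<close>, whereas \<open>f\<^sup>p(a)\<close> lies in the orbit of the periodic
  point \<open>a\<close>, which does not meet the orbit of \<open>b\<close>.
\<close>

section \<open>Orbits and periodic points\<close>

lemma orbit_iff: "y \<in> orbit f x \<longleftrightarrow> (\<exists>n. y = (f ^^ n) x)"
  by (auto simp: orbit_def)

lemma funpow_in_orbit [simp]: "(f ^^ n) x \<in> orbit f x"
  by (auto simp: orbit_iff)

lemma self_in_orbit [simp]: "x \<in> orbit f x"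
  using funpow_in_orbit[where n=0] by simp

lemma funpow_funpow: "(f ^^ m) ((f ^^ n) x) = (f ^^ (m + n)) x"
  by (simp add: funpow_add)

lemma orbit_subset_orbit: "y \<in> orbit f x \<Longrightarrow> orbit f y \<subseteq> orbit f x"
  by (auto simp: orbit_iff funpow_funpow)

lemma image_orbit_subset: "f ` orbit f x \<subseteq> orbit f x"
proof -
  have "f ((f ^^ n) x) \<in> orbit f x" for n
    using funpow_in_orbit[where n="Suc n"] by simp
  then show ?thesis by (auto simp: orbit_iff)
qed

lemma orbit_subset_invariant:
  assumes "f ` X \<subseteq> X" "x \<in> X"
  shows "orbit f x \<subseteq> X"
proof -
  have "(f ^^ n) x \<in> X" for n
    using assms by (induction n) auto
  then show ?thesis by (auto simp: orbit_iff)
qed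

lemma funpow_in_orbit_funpow:
  assumes "n \<le> t"
  shows "(f ^^ t) x \<in> orbit f ((f ^^ n) x)"
proof -
  have "(f ^^ t) x = (f ^^ (t - n)) ((f ^^ n) x)"
    using assms by (simp add: funpow_funpow)
  then show ?thesis by simp
qed

lemma orbit_eq_initial_segment_Un:
  "orbit f x = (\<lambda>t. (f ^^ t) x) ` {..<n} \<union> orbit f ((f ^^ n) x)"
proof
  show "orbit f x \<subseteq> (\<lambda>t. (f ^^ t) x) ` {..<n} \<union> orbit f ((f ^^ n) x)"
  proof
    fix y assume "y \<in> orbit f x"
    then obtain t where t: "y = (f ^^ t) x" by (auto simp: orbit_iff)
    show "y \<in> (\<lambda>t. (f ^^ t) x) ` {..<n} \<union> orbit f ((f ^^ n) x)"
      using t funpow_in_orbit_funpow[of n t f x] by (cases "t < n") auto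
  qed
  show "(\<lambda>t. (f ^^ t) x) ` {..<n} \<union> orbit f ((f ^^ n) x) \<subseteq> orbit f x"
    using orbit_subset_orbit[of "(f ^^ n) x" f x] by auto
qed

lemma continuous_on_funpow:
  assumes "continuous_on X f" "f ` X \<subseteq> X"
  shows "continuous_on X (f ^^ n)"
proof (induction n)
  case (Suc n)
  have "(f ^^ n) y \<in> X" if "y \<in> X" for y
    using orbit_subset_invariant[OF assms(2) that] funpow_in_orbit by (rule subsetD)
  then have "(f ^^ n) ` X \<subseteq> X" by blast
  then show ?case
    using continuous_on_compose[OF Suc continuous_on_subset[OF assms(1)]] by (simp add: comp_def)
qed simp

lemma periodic_point_orbit_finite:
  assumes "periodic_point f c"
  shows "finite (orbit f c)"
proof -
  obtain k where k: "k \<ge> 1" "(f ^^ k) c = c"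
    using assms unfolding periodic_point_def by blast
  have "orbit f c \<subseteq> (\<lambda>t. (f ^^ t) c) ` {..<k}"
  proof
    fix y assume "y \<in> orbit f c"
    then obtain t where "y = (f ^^ t) c" by (auto simp: orbit_iff)
    then have "y = (f ^^ (t mod k)) c" using funpow_mod_eq[OF k(2)] by simp
    then show "y \<in> (\<lambda>t. (f ^^ t) c) ` {..<k}" using k(1) by auto
  qed
  then show ?thesis by (rule finite_subset) simp
qed

lemma periodic_point_in_orbit:
  assumes "periodic_point f c" "y \<in> orbit f c"
  shows "c \<in> orbit f y"
proof -
  obtain k where k: "k \<ge> 1" "(f ^^ k) c = c"
    using assms(1) unfolding periodic_point_def by blast
  obtain j where j: "y = (f ^^ j) c" using assms(2) by (auto simp: orbit_iff)
  have "c = (f ^^ (k * j)) c" using funpow_mod_eq[OF k(2), of "k * j"] by simp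
  also have "\<dots> = (f ^^ (k * j - j)) y"
    using k(1) unfolding j funpow_funpow by (simp add: mult_le_mono1[of 1 k j, simplified])
  finally show ?thesis by simp
qed

lemma finite_orbit_if_funpow_eq:
  assumes "i < j" "(f ^^ i) x = (f ^^ j) x"
  shows "finite (orbit f x)"
proof -
  have "(f ^^ (j - i)) ((f ^^ i) x) = (f ^^ j) x"
    using assms(1) unfolding funpow_funpow by simp
  then have "(f ^^ (j - i)) ((f ^^ i) x) = (f ^^ i) x"
    using assms(2) by (rule trans[OF _ sym])
  moreover have "1 \<le> j - i" using assms(1) by simp
  ultimately have "periodic_point f ((f ^^ i) x)"
    unfolding periodic_point_def by blast
  then show ?thesis
    using orbit_eq_initial_segment_Un[of f x i] periodic_point_orbit_finite by simp
qed

section \<open>\<open>\<omega>\<close>-limit sets\<close>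

definition omega_limit :: "('a::topological_space \<Rightarrow> 'a) \<Rightarrow> 'a \<Rightarrow> 'a set" where
  "omega_limit f x = (\<Inter>n. closure (orbit f ((f ^^ n) x)))"

lemma closed_omega_limit: "closed (omega_limit f x)"
  by (auto simp: omega_limit_def)

lemma omega_limit_subset_closure_orbit: "omega_limit f x \<subseteq> closure (orbit f ((f ^^ n) x))"
  by (auto simp: omega_limit_def)

lemma omega_limit_subset_closure: "omega_limit f x \<subseteq> closure (orbit f x)"
  using omega_limit_subset_closure_orbit[of f x 0] by simp

lemma omega_limit_subset:
  assumes "closed X" "f ` X \<subseteq> X" "x \<in> X"
  shows "omega_limit f x \<subseteq> X"
proof -
  have "closure (orbit f x) \<subseteq> X"
    by (rule closure_minimal[OF orbit_subset_invariant[OF assms(2,3)] assms(1)])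
  with omega_limit_subset_closure show ?thesis by (rule order_trans)
qed

lemma compact_omega_limit:
  fixes X :: "'a::t2_space set"
  assumes "compact X" "f ` X \<subseteq> X" "x \<in> X"
  shows "compact (omega_limit f x)"
  using compact_Int_closed[OF assms(1) closed_omega_limit, of f x]
    omega_limit_subset[OF compact_imp_closed[OF assms(1)] assms(2,3)]
  by (simp add: Int_absorb1)

lemma omega_limit_approachable:
  fixes x :: "'a::metric_space"
  assumes "y \<in> omega_limit f x" "\<epsilon> > 0"
  shows "\<exists>t\<ge>n. dist ((f ^^ t) x) y < \<epsilon>"
proof -
  have "y \<in> closure (orbit f ((f ^^ n) x))"
    using assms(1) omega_limit_subset_closure_orbit by blast
  then obtain z where "z \<in> orbit f ((f ^^ n) x)" "dist z y < \<epsilon>"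
    using assms(2) closure_approachable by blast
  then obtain m where "dist ((f ^^ m) ((f ^^ n) x)) y < \<epsilon>"
    by (auto simp: orbit_iff)
  then show ?thesis
    by (intro exI[of _ "m + n"]) (simp add: funpow_funpow)
qed

lemma omega_limit_eventually_periodic:
  fixes x :: "'a::t1_space"
  assumes "periodic_point f b" "b \<in> orbit f x"
  shows "omega_limit f x \<subseteq> orbit f b"
proof -
  obtain i where "b = (f ^^ i) x" using assms(2) by (auto simp: orbit_iff)
  then have "omega_limit f x \<subseteq> closure (orbit f b)"
    using omega_limit_subset_closure_orbit[of f x i] by simp
  moreover have "closed (orbit f b)"
    using periodic_point_orbit_finite[OF assms(1)] by (rule finite_imp_closed)
  ultimately show ?thesis by simp
qed

lemma closure_orbit_diff_orbit_subset_omega_limit: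
  fixes x :: "'a::t1_space"
  shows "closure (orbit f x) - orbit f x \<subseteq> omega_limit f x"
proof
  fix y assume y: "y \<in> closure (orbit f x) - orbit f x"
  have "y \<in> closure (orbit f ((f ^^ n) x))" for n
  proof -
    let ?init = "(\<lambda>t. (f ^^ t) x) ` {..<n}"
    have "closed ?init"
      by (intro finite_imp_closed) simp
    moreover have "y \<in> closure ?init \<union> closure (orbit f ((f ^^ n) x))"
      using DiffD1[OF y] unfolding closure_Un[symmetric] orbit_eq_initial_segment_Un[of f x n, symmetric] .
    moreover have "y \<notin> ?init" using y by auto
    ultimately show ?thesis by (metis Un_iff closure_closed)
  qed
  then show "y \<in> omega_limit f x" by (simp add: omega_limit_def)
qed

lemma image_omega_limit_subset:
  assumes "closed X" "continuous_on X f" "f ` X \<subseteq> X" "x \<in> X"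
  shows "f ` omega_limit f x \<subseteq> omega_limit f x"
proof -
  have "f ` closure (orbit f ((f ^^ n) x)) \<subseteq> closure (orbit f ((f ^^ n) x))" for n
  proof (rule image_closure_subset)
    have "(f ^^ n) x \<in> X"
      using orbit_subset_invariant[OF assms(3,4)] by auto
    then have "closure (orbit f ((f ^^ n) x)) \<subseteq> X"
      using closure_minimal[OF orbit_subset_invariant[OF assms(3)] assms(1)] by blast
    then show "continuous_on (closure (orbit f ((f ^^ n) x))) f"
      using assms(2) by (rule continuous_on_subset[rotated])
    show "f ` orbit f ((f ^^ n) x) \<subseteq> closure (orbit f ((f ^^ n) x))"
      by (rule order_trans[OF image_orbit_subset closure_subset])
  qed (rule closed_closure)
  then show ?thesis
    unfolding omega_limit_def by fast
qed

lemma omega_limit_islimpt: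
  assumes "infinite (orbit f x)" "y \<in> omega_limit f x"
  shows "y islimpt orbit f x"
proof (cases "y \<in> orbit f x")
  case True
  then obtain i where i: "y = (f ^^ i) x" by (auto simp: orbit_iff)
  let ?tail = "orbit f ((f ^^ Suc i) x)"
  have "y \<notin> ?tail"
  proof
    assume "y \<in> ?tail"
    then obtain m where "y = (f ^^ m) ((f ^^ Suc i) x)"
      by (auto simp: orbit_iff)
    then have "(f ^^ i) x = (f ^^ (m + Suc i)) x"
      using i by (simp only: funpow_funpow)
    then have "finite (orbit f x)"
      by (rule finite_orbit_if_funpow_eq[rotated]) simp
    then show False using assms(1) by contradiction
  qed
  moreover have "y \<in> closure ?tail"
    using assms(2) omega_limit_subset_closure_orbit[of f x "Suc i"] by (rule subsetD[rotated])
  ultimately have "y islimpt ?tail" by (auto simp: closure_def)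
  moreover have "?tail \<subseteq> orbit f x"
    by (rule orbit_subset_orbit[OF funpow_in_orbit])
  ultimately show ?thesis by (rule islimpt_subset)
next
  case False
  moreover have "y \<in> closure (orbit f x)"
    using assms(2) omega_limit_subset_closure by blast
  ultimately show ?thesis by (auto simp: closure_def)
qed

lemma eventually_near_omega_limit:
  fixes x :: "'a::metric_space"
  assumes "compact X" "orbit f x \<subseteq> X" "\<eta> > 0"
  shows "eventually (\<lambda>t. \<exists>w\<in>omega_limit f x. dist ((f ^^ t) x) w < \<eta>) sequentially"
proof (rule ccontr)
  assume "\<not> ?thesis"
  then have "\<forall>N. \<exists>t\<ge>N. \<forall>w\<in>omega_limit f x. \<eta> \<le> dist ((f ^^ t) x) w"
    by (auto simp: eventually_sequentially not_less)
  then obtain g where g: "\<And>N. N \<le> g N" "\<And>N w. w \<in> omega_limit f x \<Longrightarrow> \<eta> \<le> dist ((f ^^ g N) x) w"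
    by metis
  have "\<forall>N. (f ^^ g N) x \<in> X" using assms(2) by auto
  then obtain l r where "l \<in> X" and r: "strict_mono r" and "((\<lambda>N. (f ^^ g N) x) \<circ> r) \<longlonglongrightarrow> l"
    by (rule seq_compactE[OF compact_imp_seq_compact[OF assms(1)]])
  then have lim: "(\<lambda>k. (f ^^ g (r k)) x) \<longlonglongrightarrow> l" by (simp add: comp_def)
  have "l \<in> closure (orbit f ((f ^^ n) x))" for n
  proof (rule Lim_in_closed_set[OF _ _ _ lim])
    have "(f ^^ g (r k)) x \<in> closure (orbit f ((f ^^ n) x))" if "n \<le> k" for k
    proof -
      have "n \<le> g (r k)"
        using that seq_suble[OF r, of k] g(1)[of "r k"] by linarith
      then show ?thesis
        by (intro closure_subset[THEN subsetD] funpow_in_orbit_funpow)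
    qed
    then show "eventually (\<lambda>k. (f ^^ g (r k)) x \<in> closure (orbit f ((f ^^ n) x))) sequentially"
      by (rule eventually_sequentiallyI)
  qed simp_all
  then have "l \<in> omega_limit f x" by (simp add: omega_limit_def)
  then have "\<forall>k. \<eta> \<le> dist ((f ^^ g (r k)) x) l" using g(2) by blast
  moreover have "eventually (\<lambda>k. dist ((f ^^ g (r k)) x) l < \<eta>) sequentially"
    using lim assms(3) by (simp add: tendsto_iff)
  ultimately have "eventually (\<lambda>k. False) sequentially"
    by (metis (mono_tags, lifting) eventually_mono not_le)
  then show False by simp
qed

lemma countable_compact_has_isolated_point:
  fixes S :: "'a::metric_space set"
  assumes "compact S" "countable S" "S \<noteq> {}"
  shows "\<exists>c\<in>S. \<not> c islimpt S"
proof (rule ccontr)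
  assume "\<not> ?thesis"
  then have limpt: "z islimpt S" if "z \<in> S" for z
    using that by blast
  let ?singletons = "(\<lambda>z. {z}) ` S"
  have "top_of_set S interior_of \<Union>?singletons = {}"
  proof (rule Baire_category_alt)
    show "completely_metrizable_space (top_of_set S) \<or>
        locally_compact_space (top_of_set S) \<and> regular_space (top_of_set S)"
      using assms(1) compact_space_subtopology compact_imp_locally_compact_space
        regular_space_subtopology regular_space_euclidean by (metis compactin_euclidean_iff)
    show "countable ?singletons" using assms(2) by blast
  next
    fix T assume "T \<in> ?singletons"
    then obtain z where z: "z \<in> S" "T = {z}" by blast
    have "closedin (top_of_set S) {z}"
      using z(1) by (simp add: closedin_closed_Int[of "{z}"] Int_absorb2)
    moreover have "\<not> openin (top_of_set S) {z}"
      using infinite_openin[of S "{z}" z] limpt[OF z(1)] by auto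
    then have "top_of_set S interior_of {z} = {}"
      by (auto simp: interior_of_eq_empty subset_singleton_iff)
    ultimately show "closedin (top_of_set S) T \<and> top_of_set S interior_of T = {}"
      using z(2) by simp
  qed
  moreover have "\<Union>?singletons = S" by blast
  ultimately show False
    using assms(3) interior_of_topspace[of "top_of_set S"] by simp
qed

lemma openin_finite_uniform_radius:
  fixes C :: "'a::metric_space set"
  assumes "finite C" "openin (top_of_set W) C"
  obtains d where "d > 0" "\<And>u z. u \<in> C \<Longrightarrow> z \<in> W \<Longrightarrow> dist z u < d \<Longrightarrow> z \<in> C"
proof -
  obtain e where e: "\<And>u. u \<in> C \<Longrightarrow> e u > 0 \<and> (\<forall>z\<in>W. dist z u < e u \<longrightarrow> z \<in> C)"
    using assms(2) unfolding openin_euclidean_subtopology_iff by metis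
  define d where "d = Min (insert 1 (e ` C))"
  have "d > 0"
    unfolding d_def using assms(1) e by auto
  moreover have "d \<le> e u" if "u \<in> C" for u
    unfolding d_def using assms(1) that by (auto intro: Min_le)
  ultimately show ?thesis
    using that e by (meson less_le_trans)
qed

lemma orbit_of_isolated_periodic_point_openin:
  fixes f :: "'a::metric_space \<Rightarrow> 'a"
  assumes "continuous_on W f" "f ` W \<subseteq> W" "\<forall>y\<in>W. periodic_point f y"
    and "c \<in> W" "\<not> c islimpt W"
  shows "openin (top_of_set W) (orbit f c)"
  unfolding openin_euclidean_subtopology_iff
proof (intro conjI ballI)
  show "orbit f c \<subseteq> W"
    by (rule orbit_subset_invariant[OF assms(2,4)])
  then have orbit_W: "\<And>y. y \<in> W \<Longrightarrow> orbit f y \<subseteq> W"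
    using orbit_subset_invariant[OF assms(2)] by blast
  fix u assume u: "u \<in> orbit f c"
  obtain m where m: "(f ^^ m) u = c"
    using periodic_point_in_orbit[OF assms(3)[rule_format, OF assms(4)] u] by (auto simp: orbit_iff)
  obtain e where e: "e > 0" "\<And>z. z \<in> W \<Longrightarrow> dist z c < e \<Longrightarrow> z = c"
    using assms(5) unfolding islimpt_approachable by blast
  have "u \<in> W" using u \<open>orbit f c \<subseteq> W\<close> by blast
  then obtain \<delta> where \<delta>: "\<delta> > 0" "\<And>z. z \<in> W \<Longrightarrow> dist z u < \<delta> \<Longrightarrow> dist ((f ^^ m) z) c < e"
    using continuous_on_funpow[OF assms(1,2), of m] e(1) m unfolding continuous_on_iff by metis
  have "z \<in> orbit f c" if z: "z \<in> W" "dist z u < \<delta>" for z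
  proof -
    have "(f ^^ m) z \<in> W" using orbit_W[OF z(1)] by auto
    then have "(f ^^ m) z = c" using e(2) \<delta>(2)[OF z] by blast
    moreover have "z \<in> orbit f ((f ^^ m) z)"
      by (rule periodic_point_in_orbit[OF assms(3)[rule_format, OF z(1)] funpow_in_orbit])
    ultimately show ?thesis by simp
  qed
  with \<delta>(1) show "\<exists>\<delta>>0. \<forall>z\<in>W. dist z u < \<delta> \<longrightarrow> z \<in> orbit f c" by blast
qed

text \<open>\<open>\<omega>\<close>-limit sets are invariantly connected: once the orbit is \<open>\<eta>\<close>-close to \<open>C\<close> it stays so,
  because \<open>f\<close> moves it less than \<open>d/2\<close> away from \<open>f ` C \<subseteq> C\<close>, and points of \<open>\<omega>(x)\<close> that close
  to \<open>C\<close> already lie in \<open>C\<close>.\<close>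
lemma omega_limit_subset_openin_invariant:
  fixes f :: "'a::metric_space \<Rightarrow> 'a"
  assumes "compact X" "continuous_on X f" "f ` X \<subseteq> X" "x \<in> X"
    and "C \<subseteq> omega_limit f x" "C \<noteq> {}" "f ` C \<subseteq> C"
    and "finite C" "openin (top_of_set (omega_limit f x)) C"
  shows "omega_limit f x \<subseteq> C"
proof
  let ?W = "omega_limit f x"
  have orbit_X: "orbit f x \<subseteq> X" by (rule orbit_subset_invariant[OF assms(3,4)])
  have CX: "C \<subseteq> X"
    using assms(5) omega_limit_subset[OF compact_imp_closed[OF assms(1)] assms(3,4)] by (rule order_trans)
  obtain d where d: "d > 0" "\<And>u z. u \<in> C \<Longrightarrow> z \<in> ?W \<Longrightarrow> dist z u < d \<Longrightarrow> z \<in> C"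
    using openin_finite_uniform_radius[OF assms(8,9)] by blast
  obtain \<eta>0 where \<eta>0: "\<eta>0 > 0" "\<And>u v. u \<in> X \<Longrightarrow> v \<in> X \<Longrightarrow> dist v u < \<eta>0 \<Longrightarrow> dist (f v) (f u) < d / 2"
    using compact_uniformly_continuous[OF assms(2,1)] d(1)
    unfolding uniformly_continuous_on_def by (metis half_gt_zero)
  define \<eta> where "\<eta> = min \<eta>0 (d / 2)"
  have \<eta>: "\<eta> > 0" "\<eta> \<le> \<eta>0" "2 * \<eta> \<le> d"
    using \<eta>0(1) d(1) by (auto simp: \<eta>_def)
  obtain T where T: "\<And>t. T \<le> t \<Longrightarrow> \<exists>w\<in>?W. dist ((f ^^ t) x) w < \<eta>"
    using eventually_near_omega_limit[OF assms(1) orbit_X \<eta>(1)]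
    unfolding eventually_sequentially by blast
  obtain c where "c \<in> C" using assms(6) by blast
  then obtain t0 where t0: "T \<le> t0" "dist ((f ^^ t0) x) c < \<eta>"
    using omega_limit_approachable assms(5) \<eta>(1) by blast
  have tracking: "\<exists>w\<in>C. dist ((f ^^ (s + t0)) x) w < \<eta>" for s
  proof (induction s)
    case 0
    show ?case using t0(2) \<open>c \<in> C\<close> by auto
  next
    case (Suc s)
    then obtain w where w: "w \<in> C" "dist ((f ^^ (s + t0)) x) w < \<eta>" by blast
    have "w \<in> X" "(f ^^ (s + t0)) x \<in> X"
      using w(1) CX orbit_X by auto
    then have "dist (f ((f ^^ (s + t0)) x)) (f w) < d / 2"
      using \<eta>0(2) w(2) \<eta>(2) by simp
    moreover obtain w' where w': "w' \<in> ?W" "dist ((f ^^ (Suc s + t0)) x) w' < \<eta>"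
      using T t0(1) by (metis le_add2 order_trans)
    ultimately have "dist w' (f w) < d"
      using dist_triangle2[of w' "f w" "(f ^^ (Suc s + t0)) x"] \<eta>(3) by (simp add: dist_commute)
    then have "w' \<in> C" using d(2) assms(7) w(1) w'(1) by blast
    with w'(2) show ?case by blast
  qed
  fix y assume "y \<in> ?W"
  then obtain t where t: "t0 \<le> t" "dist ((f ^^ t) x) y < \<eta>"
    using omega_limit_approachable \<eta>(1) by blast
  obtain w where w: "w \<in> C" "dist ((f ^^ t) x) w < \<eta>"
    using tracking[of "t - t0"] t(1) by auto
  have "dist y w < d"
    using dist_triangle3[of y w "(f ^^ t) x"] t(2) w(2) \<eta>(3) by simp
  then show "y \<in> C" using d(2) w(1) \<open>y \<in> ?W\<close> by blast
qed

lemma omega_limit_subset_periodic_orbit: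
  fixes f :: "'a::metric_space \<Rightarrow> 'a"
  assumes "compact X" "countable X" "continuous_on X f" "f ` X \<subseteq> X"
    and "\<forall>y\<in>X. y islimpt X \<longrightarrow> periodic_point f y" "x \<in> X"
    and "periodic_point f b" "b \<in> closure (orbit f x)"
  shows "omega_limit f x \<subseteq> orbit f b"
proof (cases "b \<in> orbit f x")
  case True
  then show ?thesis by (rule omega_limit_eventually_periodic[OF assms(7)])
next
  case False
  let ?W = "omega_limit f x"
  have orbit_X: "orbit f x \<subseteq> X" by (rule orbit_subset_invariant[OF assms(4,6)])
  have WX: "?W \<subseteq> X" by (rule omega_limit_subset[OF compact_imp_closed[OF assms(1)] assms(4,6)])
  have "infinite (orbit f x)"
  proof
    assume "finite (orbit f x)"
    then have "closure (orbit f x) = orbit f x" by (simp add: finite_imp_closed)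
    then show False using False assms(8) by simp
  qed
  have periodic: "periodic_point f y" if "y \<in> ?W" for y
  proof -
    have "y islimpt X"
      by (rule islimpt_subset[OF omega_limit_islimpt[OF \<open>infinite (orbit f x)\<close> that] orbit_X])
    with assms(5) WX that show ?thesis by blast
  qed
  have bW: "b \<in> ?W"
    using closure_orbit_diff_orbit_subset_omega_limit assms(8) False by blast
  then have "?W \<noteq> {}" by blast
  then obtain c where c: "c \<in> ?W" "\<not> c islimpt ?W"
    using countable_compact_has_isolated_point[OF compact_omega_limit[OF assms(1,4,6)]
        countable_subset[OF WX assms(2)]] by blast
  have fW: "f ` ?W \<subseteq> ?W"
    by (rule image_omega_limit_subset[OF compact_imp_closed[OF assms(1)] assms(3,4,6)])
  have "?W \<subseteq> orbit f c"
  proof (rule omega_limit_subset_openin_invariant[OF assms(1,3,4,6)])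
    show "orbit f c \<subseteq> ?W" by (rule orbit_subset_invariant[OF fW c(1)])
    show "orbit f c \<noteq> {}" using self_in_orbit[where f=f and x=c] by blast
    show "f ` orbit f c \<subseteq> orbit f c" by (rule image_orbit_subset)
    show "finite (orbit f c)" by (rule periodic_point_orbit_finite[OF periodic[OF c(1)]])
    show "openin (top_of_set ?W) (orbit f c)"
      using orbit_of_isolated_periodic_point_openin[OF continuous_on_subset[OF assms(3) WX] fW _ c] periodic
      by blast
  qed
  with bW have "b \<in> orbit f c" by (rule subsetD[rotated])
  then have "orbit f c \<subseteq> orbit f b"
    by (rule orbit_subset_orbit[OF periodic_point_in_orbit[OF periodic[OF c(1)]]])
  with \<open>?W \<subseteq> orbit f c\<close> show ?thesis by (rule order_trans)
qed

section \<open>Iterates along free ultrafilters\<close>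

lemma free_ultrafilter_eventually_ge:
  assumes "free_ultrafilter p"
  shows "eventually (\<lambda>n. N \<le> n) p"
proof (induction N)
  case (Suc N)
  have "eventually (\<lambda>n. n \<noteq> N) p"
    using assms unfolding free_ultrafilter_def ultrafilter_def by blast
  with Suc show ?case by eventually_elim auto
qed simp

lemma ultrafilter_tendsto_in_compact:
  assumes "ultrafilter p" "compact X" "\<And>n. g n \<in> X"
  obtains l where "l \<in> X" "(g \<longlongrightarrow> l) p"
proof -
  have p: "p \<noteq> bot" "\<And>P. eventually P p \<or> eventually (\<lambda>n. \<not> P n) p"
    using assms(1) unfolding ultrafilter_def by auto
  let ?F = "filtermap g p"
  have "?F \<noteq> bot" using p(1) by (simp add: filtermap_bot_iff)
  moreover have "eventually (\<lambda>y. y \<in> X) ?F"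
    using assms(3) by (simp add: eventually_filtermap)
  ultimately obtain l where l: "l \<in> X" "inf (nhds l) ?F \<noteq> bot"
    using assms(2) unfolding compact_filter by blast
  have "(g \<longlongrightarrow> l) p"
  proof (rule topological_tendstoI)
    fix S assume "open S" "l \<in> S"
    show "eventually (\<lambda>n. g n \<in> S) p"
    proof (rule ccontr)
      assume "\<not> eventually (\<lambda>n. g n \<in> S) p"
      then have "eventually (\<lambda>y. y \<notin> S) ?F"
        using p(2) by (auto simp: eventually_filtermap)
      moreover have "eventually (\<lambda>y. y \<in> S) (nhds l)"
        using \<open>open S\<close> \<open>l \<in> S\<close> by (rule eventually_nhds_in_open)
      ultimately have "eventually (\<lambda>y. False) (inf (nhds l) ?F)"
        unfolding eventually_inf by blast
      with l(2) show False by (simp add: eventually_False)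
    qed
  qed
  with l(1) show ?thesis by (rule that)
qed

lemma tendsto_p_iterate:
  fixes X :: "'a::t2_space set"
  assumes "ultrafilter p" "compact X" "f ` X \<subseteq> X" "x \<in> X"
  shows "((\<lambda>n. (f ^^ n) x) \<longlongrightarrow> p_iterate f p x) p"
proof -
  have "(f ^^ n) x \<in> X" for n
    using orbit_subset_invariant[OF assms(3,4)] by auto
  then obtain l where "((\<lambda>n. (f ^^ n) x) \<longlongrightarrow> l) p"
    using ultrafilter_tendsto_in_compact[OF assms(1,2)] by metis
  moreover have "p \<noteq> bot" using assms(1) unfolding ultrafilter_def by blast
  ultimately show ?thesis
    unfolding p_iterate_def by (simp add: tendsto_Lim)
qed

lemma p_iterate_in_omega_limit:
  fixes X :: "'a::t2_space set"
  assumes "free_ultrafilter p" "compact X" "f ` X \<subseteq> X" "x \<in> X"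
  shows "p_iterate f p x \<in> omega_limit f x"
  unfolding omega_limit_def
proof
  fix n
  have "ultrafilter p" "p \<noteq> bot"
    using assms(1) unfolding free_ultrafilter_def ultrafilter_def by auto
  moreover have "eventually (\<lambda>t. (f ^^ t) x \<in> closure (orbit f ((f ^^ n) x))) p"
    using free_ultrafilter_eventually_ge[OF assms(1), of n]
    by eventually_elim (intro closure_subset[THEN subsetD] funpow_in_orbit_funpow)
  ultimately show "p_iterate f p x \<in> closure (orbit f ((f ^^ n) x))"
    by (intro Lim_in_closed_set[OF closed_closure _ _ tendsto_p_iterate[OF _ assms(2-4)]])
qed

theorem theorem3p9:
  fixes X :: "'a::metric_space set" and f :: "'a \<Rightarrow> 'a"
    and a b :: 'a and s :: "nat \<Rightarrow> 'a"
  assumes "compact X" and "countable X"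
    and "continuous_on X f" and "f ` X \<subseteq> X"
    and "\<forall>x\<in>X. x islimpt X \<longrightarrow> periodic_point f x"
    and "a \<in> X" and "a islimpt X"
    and "\<forall>n. s n \<in> X" and "s \<longlonglongrightarrow> a"
    and "b \<in> X" and "periodic_point f b" and "b \<notin> orbit f a"
    and "\<forall>n. b \<in> closure (orbit f (s n))"
  shows "\<forall>p. free_ultrafilter p \<longrightarrow> \<not> continuous (at a within X) (p_iterate f p)"
proof (intro allI impI notI)
  fix p assume p: "free_ultrafilter p" and cont: "continuous (at a within X) (p_iterate f p)"
  have in_orbit_b: "p_iterate f p (s n) \<in> orbit f b" for n
    using p_iterate_in_omega_limit[OF p assms(1,4) assms(8)[rule_format]]
      omega_limit_subset_periodic_orbit[OF assms(1-5) assms(8)[rule_format] assms(11) assms(13)[rule_format]]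
    by (rule subsetD[rotated])
  have "closed (orbit f b)"
    using periodic_point_orbit_finite[OF assms(11)] by (rule finite_imp_closed)
  moreover have "eventually (\<lambda>n. p_iterate f p (s n) \<in> orbit f b) sequentially"
    using in_orbit_b by simp
  moreover have "(\<lambda>n. p_iterate f p (s n)) \<longlonglongrightarrow> p_iterate f p a"
    by (rule continuous_within_tendsto_compose'[OF cont]) (use assms(8,9) in auto)
  ultimately have "p_iterate f p a \<in> orbit f b"
    by (rule Lim_in_closed_set[OF _ _ trivial_limit_sequentially])
  then have "b \<in> orbit f (p_iterate f p a)"
    by (rule periodic_point_in_orbit[OF assms(11)])
  moreover have "omega_limit f a \<subseteq> orbit f a"
    by (rule omega_limit_eventually_periodic[OF assms(5)[rule_format, OF assms(6,7)] self_in_orbit])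
  then have "orbit f (p_iterate f p a) \<subseteq> orbit f a"
    by (rule orbit_subset_orbit[OF subsetD[OF _ p_iterate_in_omega_limit[OF p assms(1,4,6)]]])
  ultimately show False using assms(12) by blast
qed

end
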